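(* Let $f\colon 2^{\mathcal{N}}\to\mathbb{R}$ be non-negative and submodular, let $k$ be a positive integer, let $\varepsilon>0$, and let $S,O\subseteq\mathcal{N}$ with $|S|=|O|=k$. Assume $\mathcal{N}\setminus S$ contains at least $k$ elements $d$ with $f(d\mid S)\ge 0$. Suppose that for every integer $0\le t\le k$, \[ \max_{T\subseteq\mathcal{N}\setminus S,\ |T|=t}\ \sum_{u\in T} f(u\mid S)\ \le\ \min_{T\subseteq S,\ |T|=t}\ \sum_{v\in T} f(v\mid S-v)\ +\ \varepsilon f(S). \] Then \[ f(S)\ \ge\ \frac{f(S\cup O)+f(S\cap O)}{2+\varepsilon}\qquad\text{and}\qquad f(S)\ \ge\ \frac{f(S\cap O)}{1+\varepsilon}. \]
   Context: Notation: $f(u\mid A)=f(A\cup\{u\})-f(A)$; $S-v=S\setminus\{v\}$. Submodularity: $f(A\cup\{s\})-f(A)\ge f(B\cup\{s\})-f(B)$ for all $A\subseteq B\subseteq\mathcal{N}$, $s\notin B$. *)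

theory Defs
  imports Complex_Main
begin

definition marg :: "('a set \<Rightarrow> real) \<Rightarrow> 'a \<Rightarrow> 'a set \<Rightarrow> real" where
  "marg f u A = f (A \<union> {u}) - f A"

definition submodular_on :: "'a set \<Rightarrow> ('a set \<Rightarrow> real) \<Rightarrow> bool" where
  "submodular_on N f \<longleftrightarrow>
     (\<forall>A B s. A \<subseteq> B \<and> B \<subseteq> N \<and> s \<in> N \<and> s \<notin> B \<longrightarrow>
        f (A \<union> {s}) - f A \<ge> f (B \<union> {s}) - f B)"

definition nonneg_on :: "'a set \<Rightarrow> ('a set \<Rightarrow> real) \<Rightarrow> bool" where
  "nonneg_on N f \<longleftrightarrow> (\<forall>A. A \<subseteq> N \<longrightarrow> f A \<ge> 0)"

end

theory Submission
  imports Defs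
begin

text \<open>Let \<open>a = |O - S| = |S - O|\<close>. By submodularity, adding \<open>O - S\<close> to \<open>S\<close> gains at most the sum of
  the singleton marginals \<open>f(u | S)\<close>, and removing \<open>S - O\<close> from \<open>S\<close> loses at least the sum of the
  marginals \<open>f(v | S - v)\<close>. The hypothesis at \<open>t = a\<close> compares these two sums:
  \<open>f(S \<union> O) - f(S) \<le> f(S) - f(S \<inter> O) + \<epsilon> f(S)\<close>, which is the first bound. The second bound
  replaces the left-hand side by \<open>0\<close>, which is possible because \<open>a\<close> elements with non-negative
  marginal make the maximum non-negative.\<close>

lemma submodular_gain_le_sum_marg:
  assumes sub: "submodular_on N f" and "S \<subseteq> N" and "finite T" and "T \<subseteq> N - S"
  shows "f (S \<union> T) - f S \<le> (\<Sum>u\<in>T. marg f u S)"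
  using \<open>finite T\<close> \<open>T \<subseteq> N - S\<close>
proof (induction T rule: finite_induct)
  case empty
  then show ?case by simp
next
  case (insert x T)
  have "x \<in> N" "x \<notin> S \<union> T" "S \<union> T \<subseteq> N"
    using insert.prems insert.hyps \<open>S \<subseteq> N\<close> by auto
  then have "f (S \<union> T \<union> {x}) - f (S \<union> T) \<le> f (S \<union> {x}) - f S"
    using sub unfolding submodular_on_def by (meson Un_upper1)
  moreover have "S \<union> insert x T = S \<union> T \<union> {x}" by auto
  ultimately show ?case using insert by (simp add: marg_def)
qed

lemma submodular_sum_marg_removal_le_loss:
  assumes sub: "submodular_on N f" and "S \<subseteq> N" and "finite R" and "R \<subseteq> S"
  shows "(\<Sum>v\<in>R. marg f v (S - {v})) \<le> f S - f (S - R)"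
  using \<open>finite R\<close> \<open>R \<subseteq> S\<close>
proof (induction R rule: finite_induct)
  case empty
  then show ?case by simp
next
  case (insert x R)
  have x: "x \<in> S - R" using insert by auto
  have "x \<in> N" "x \<notin> S - {x}" "S - {x} \<subseteq> N" "S - R - {x} \<subseteq> S - {x}"
    using x \<open>S \<subseteq> N\<close> by auto
  then have "f (S - {x} \<union> {x}) - f (S - {x}) \<le> f (S - R - {x} \<union> {x}) - f (S - R - {x})"
    using sub unfolding submodular_on_def by meson
  moreover have "S - R - {x} \<union> {x} = S - R" using x by auto
  moreover have "S - insert x R = S - R - {x}" by auto
  ultimately show ?case using insert by (simp add: marg_def)
qed

lemma finite_subsets_of_card: "finite A \<Longrightarrow> finite {T. T \<subseteq> A \<and> card T = t}"
  by (rule finite_subset[of _ "Pow A"]) auto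

lemma le_Max_subsets_of_card:
  fixes g :: "'a set \<Rightarrow> 'b::linorder"
  assumes "finite A" and "T \<subseteq> A"
  shows "g T \<le> Max (g ` {T'. T' \<subseteq> A \<and> card T' = card T})"
  using assms by (intro Max_ge finite_imageI finite_subsets_of_card) auto

lemma Min_subsets_of_card_le:
  fixes g :: "'a set \<Rightarrow> 'b::linorder"
  assumes "finite A" and "T \<subseteq> A"
  shows "Min (g ` {T'. T' \<subseteq> A \<and> card T' = card T}) \<le> g T"
  using assms by (intro Min_le finite_imageI finite_subsets_of_card) auto

lemma card_Diff_sym_eq:
  assumes "finite A" and "finite B" and "card A = card B"
  shows "card (A - B) = card (B - A)"
  using assms by (simp add: card_le_sym_Diff le_antisym)

lemma Max_sum_subsets_nonneg:
  fixes g :: "'a \<Rightarrow> real"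
  assumes "finite A" and "card {x \<in> A. g x \<ge> 0} \<ge> t"
  shows "0 \<le> Max ((\<lambda>T. \<Sum>x\<in>T. g x) ` {T. T \<subseteq> A \<and> card T = t})"
proof -
  obtain D where D: "D \<subseteq> {x \<in> A. g x \<ge> 0}" "card D = t"
    using obtain_subset_with_card_n[OF assms(2)] by blast
  have "0 \<le> (\<Sum>x\<in>D. g x)" using D by (intro sum_nonneg) auto
  also have "\<dots> \<le> Max ((\<lambda>T. \<Sum>x\<in>T. g x) ` {T. T \<subseteq> A \<and> card T = t})"
    using le_Max_subsets_of_card[OF assms(1), of D "\<lambda>T. \<Sum>x\<in>T. g x"] D by auto
  finally show ?thesis .
qed

lemma submodular_gain_le_Max_sum_marg:
  assumes "submodular_on N f" and "finite N" and "S \<subseteq> N" and "A \<subseteq> N"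
  shows "f (S \<union> A) - f S
    \<le> Max ((\<lambda>T. \<Sum>u\<in>T. marg f u S) ` {T. T \<subseteq> N - S \<and> card T = card (A - S)})"
proof -
  have A_S: "A - S \<subseteq> N - S" and fin: "finite (N - S)" "finite (A - S)"
    using assms(2,4) finite_subset by auto
  have "f (S \<union> (A - S)) - f S \<le> (\<Sum>u\<in>A - S. marg f u S)"
    using submodular_gain_le_sum_marg[OF assms(1,3) fin(2) A_S] .
  also have "\<dots> \<le> Max ((\<lambda>T. \<Sum>u\<in>T. marg f u S) ` {T. T \<subseteq> N - S \<and> card T = card (A - S)})"
    using le_Max_subsets_of_card[OF fin(1) A_S] .
  finally show ?thesis by (simp add: Un_Diff_cancel)
qed

lemma Min_sum_marg_le_submodular_loss:
  assumes "submodular_on N f" and "S \<subseteq> N" and "finite S"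
  shows "Min ((\<lambda>T. \<Sum>v\<in>T. marg f v (S - {v})) ` {T. T \<subseteq> S \<and> card T = card (S - A)})
    \<le> f S - f (S \<inter> A)"
proof -
  have "Min ((\<lambda>T. \<Sum>v\<in>T. marg f v (S - {v})) ` {T. T \<subseteq> S \<and> card T = card (S - A)})
      \<le> (\<Sum>v\<in>S - A. marg f v (S - {v}))"
    using Min_subsets_of_card_le[OF assms(3) Diff_subset] .
  also have "\<dots> \<le> f S - f (S - (S - A))"
    using submodular_sum_marg_removal_le_loss[OF assms(1,2)] assms(3) by blast
  finally show ?thesis by (simp add: Diff_Diff_Int)
qed

theorem mainTheorem3:
  fixes N :: "'a set" and f :: "'a set \<Rightarrow> real" and k :: nat and \<epsilon> :: real
    and S Opt :: "'a set"
  assumes "finite N"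
    and "nonneg_on N f" and "submodular_on N f"
    and "k > 0" and "\<epsilon> > 0"
    and "S \<subseteq> N" and "Opt \<subseteq> N" and "card S = k" and "card Opt = k"
    and "card {d \<in> N - S. marg f d S \<ge> 0} \<ge> k"
    and "\<forall>t::nat. t \<le> k \<longrightarrow>
           Max ((\<lambda>T. \<Sum>u\<in>T. marg f u S) ` {T. T \<subseteq> N - S \<and> card T = t})
           \<le> Min ((\<lambda>T. \<Sum>v\<in>T. marg f v (S - {v})) ` {T. T \<subseteq> S \<and> card T = t}) + \<epsilon> * f S"
  shows "f S \<ge> (f (S \<union> Opt) + f (S \<inter> Opt)) / (2 + \<epsilon>)
         \<and> f S \<ge> f (S \<inter> Opt) / (1 + \<epsilon>)"
proof -
  have fin: "finite S" "finite Opt" "finite (N - S)"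
    using assms(1,6,7) finite_subset by auto
  define a where "a = card (Opt - S)"
  define M where "M = Max ((\<lambda>T. \<Sum>u\<in>T. marg f u S) ` {T. T \<subseteq> N - S \<and> card T = a})"
  define m where "m = Min ((\<lambda>T. \<Sum>v\<in>T. marg f v (S - {v})) ` {T. T \<subseteq> S \<and> card T = a})"
  have a_le: "a \<le> k" and card_S_Opt: "card (S - Opt) = a"
    using card_mono[OF fin(2), of "Opt - S"] card_Diff_sym_eq[OF fin(1,2)] assms(8,9)
    by (auto simp: a_def)
  have "M \<le> m + \<epsilon> * f S" using assms(11) a_le by (simp add: M_def m_def)
  moreover have "f (S \<union> Opt) - f S \<le> M"
    using submodular_gain_le_Max_sum_marg[OF assms(3,1,6,7)] by (simp add: M_def a_def)
  moreover have "m \<le> f S - f (S \<inter> Opt)"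
    using Min_sum_marg_le_submodular_loss[OF assms(3,6) fin(1), of Opt] by (simp add: m_def card_S_Opt)
  moreover have "0 \<le> M"
    unfolding M_def using Max_sum_subsets_nonneg[OF fin(3)] assms(10) a_le by simp
  ultimately have "f (S \<union> Opt) + f (S \<inter> Opt) \<le> (2 + \<epsilon>) * f S"
    and "f (S \<inter> Opt) \<le> (1 + \<epsilon>) * f S"
    by (simp_all add: algebra_simps)
  then show ?thesis using assms(5) by (simp add: divide_le_eq mult.commute)
qed

end
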